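(* Consider $x_{i}=x_{i-1}+u_{i}$ (scalar), where $u_{i}$ has mean zero and positive finite long-run variance $\Sigma_{u}$, $E x_{0}^{2}<\infty$, and the strong approximation $\sup_{1\leq i\leq t}|x_{i}-W_{x}(i)|=O_{a.s.}(t^{1/2-\delta'})$ holds for some $0<\delta'<\frac{1}{2}$, with $W_{x}$ a Wiener process with increment variance $\Sigma_{u}$. Then there exist a random variable $m_{0}$ and a constant $0<c_{0}<\infty$ such that, for all $m\geq m_{0}$, $\sum_{i=1}^{m}x_{i}^{2}\geq c_{0}\frac{m^{2}}{\ln\ln m}$.
   Context: Univariate cointegrating regression setting $y_{i}=\beta x_{i}+\epsilon_{i}$, $x_{i}=x_{i-1}+u_{i}$. *)

theory Defs
  imports "HOL-Probability.Probability"
begin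

definition wiener_process :: "'a measure \<Rightarrow> real \<Rightarrow> (real \<Rightarrow> 'a \<Rightarrow> real) \<Rightarrow> bool" where
  "wiener_process M sigma2 W \<longleftrightarrow>
     prob_space M \<and>
     (\<forall>t\<ge>0. W t \<in> borel_measurable M) \<and>
     (AE \<omega> in M. W 0 \<omega> = 0) \<and>
     (AE \<omega> in M. continuous_on {0..} (\<lambda>t. W t \<omega>)) \<and>
     (\<forall>s t. 0 \<le> s \<and> s < t \<longrightarrow>
        distributed M lborel (\<lambda>\<omega>. W t \<omega> - W s \<omega>)
          (\<lambda>y. ennreal (normal_density 0 (sqrt (sigma2 * (t - s))) y))) \<and>
     (\<forall>(n::nat) (tt::nat \<Rightarrow> real). 0 \<le> tt 0 \<and> (\<forall>k<n. tt k < tt (Suc k)) \<longrightarrow>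
        prob_space.indep_vars M (\<lambda>_. borel) (\<lambda>k \<omega>. W (tt (Suc k)) \<omega> - W (tt k) \<omega>) {..<n})"

definition has_long_run_variance :: "'a measure \<Rightarrow> (nat \<Rightarrow> 'a \<Rightarrow> real) \<Rightarrow> real \<Rightarrow> bool" where
  "has_long_run_variance M u S \<longleftrightarrow>
     (\<lambda>n. (\<integral>\<omega>. (\<Sum>i=1..n. u i \<omega>)\<^sup>2 \<partial>M) / real n) \<longlonglongrightarrow> S"

end

theory Submission
  imports Defs "HOL-Real_Asymp.Real_Asymp"
begin

(* Cut the Wiener process, sampled at the integers, into consecutive blocks of length 2h. Inside
   a block the h increments W(t + h) - W(t) are N(0, Su h), so each is below sqrt(Su h)/30 with
   probability at most 1/30, and by Markov's inequality for the number of such increments the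
   block's sum of squared increments falls below Su h^2/1800 with probability at most 1/15.
   Since (a - b)^2 <= 2 (a^2 + b^2), a small sum of W(i)^2 over n blocks forces half of the
   independent blocks to be small, which has probability at most 2^-n. At scale 2^k take about
   3 ln k blocks: the failure probabilities are summable, so by Borel-Cantelli eventually
   sum_{i <= 2^k} W(i)^2 >= c n h^2 ~ c 4^k / ln ln 2^k. Monotonicity extends this to all m, and
   the strong approximation moves it to x, because sum_{i <= m} (x i - W i)^2 = O(m^(2 - 2 delta'))
   is negligible against m^2 / ln ln m. *)

lemma normal_density_le:
  assumes "\<sigma> > 0"
  shows "normal_density 0 \<sigma> y \<le> 1 / (2 * \<sigma>)"
proof -
  have "2 \<le> sqrt (2 * pi)"
    using pi_gt3 by (simp add: real_le_rsqrt)
  then have "2 * \<sigma> \<le> sqrt (2 * pi * \<sigma>\<^sup>2)"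
    using assms by (simp add: real_sqrt_mult)
  moreover have "exp (- y\<^sup>2 / (2 * \<sigma>\<^sup>2)) \<le> 1"
    by simp
  ultimately show ?thesis
    using assms by (simp add: normal_density_def frac_le)
qed

lemma (in prob_space) prob_abs_le_normal:
  assumes D: "distributed M lborel X (\<lambda>y. ennreal (normal_density 0 \<sigma> y))"
    and "\<sigma> > 0" "r \<ge> 0"
  shows "prob {\<omega>\<in>space M. \<bar>X \<omega>\<bar> \<le> r} \<le> r / \<sigma>"
proof -
  have "{\<omega>\<in>space M. \<bar>X \<omega>\<bar> \<le> r} = X -` {-r..r} \<inter> space M"
    by auto
  moreover have "emeasure M (X -` {-r..r} \<inter> space M)
      = (\<integral>\<^sup>+y. ennreal (normal_density 0 \<sigma> y) * indicator {-r..r} y \<partial>lborel)"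
    by (rule distributed_emeasure[OF D]) simp
  also have "\<dots> \<le> (\<integral>\<^sup>+y. ennreal (1 / (2 * \<sigma>)) * indicator {-r..r} y \<partial>lborel)"
    using assms by (intro nn_integral_mono) (auto intro!: mult_right_mono normal_density_le)
  also have "\<dots> = ennreal (r / \<sigma>)"
    using assms by (subst nn_integral_cmult_indicator) (auto simp: ennreal_mult'[symmetric])
  ultimately show ?thesis
    using assms by (simp add: emeasure_eq_measure ennreal_le_iff)
qed

lemma card_le_twice_card_below:
  fixes g :: "'i \<Rightarrow> real" and a :: real
  assumes "finite I" "\<And>i. i \<in> I \<Longrightarrow> 0 \<le> g i" "a > 0"
    and sum_le: "(\<Sum>i\<in>I. g i) \<le> a * card I / 2"
  shows "card I \<le> 2 * card {i\<in>I. g i \<le> a}"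
proof -
  let ?B = "{i\<in>I. \<not> g i \<le> a}"
  have "a * card ?B = (\<Sum>i\<in>?B. a)"
    by simp
  also have "\<dots> \<le> (\<Sum>i\<in>?B. g i)"
    by (rule sum_mono) auto
  also have "\<dots> \<le> (\<Sum>i\<in>I. g i)"
    using assms by (intro sum_mono2) auto
  finally have "2 * (a * card ?B) \<le> a * card I"
    using sum_le by linarith
  then have "2 * card ?B \<le> card I"
    using \<open>a > 0\<close> by (simp add: mult.left_commute)
  moreover have "card {i\<in>I. g i \<le> a} + card ?B = card I"
    using \<open>finite I\<close> by (subst card_Un_disjoint[symmetric]) (auto intro: arg_cong[where f = card])
  ultimately show ?thesis
    by linarith
qed

lemma (in prob_space) prob_half_of_events_le:
  assumes "h > 0" and A: "\<And>i. i < h \<Longrightarrow> A i \<in> events" and p: "\<And>i. i < h \<Longrightarrow> prob (A i) \<le> p"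
    and S: "S \<subseteq> {\<omega>\<in>space M. h \<le> 2 * card {i\<in>{..<h}. \<omega> \<in> A i}}"
  shows "prob S \<le> 2 * p"
proof -
  define N where "N \<omega> = (\<Sum>i<h. indicator (A i) \<omega> :: real)" for \<omega>
  have N_eq: "N \<omega> = card {i\<in>{..<h}. \<omega> \<in> A i}" for \<omega>
    using sum_indicator_eq_card[of "{..<h}" "{i. \<omega> \<in> A i}"]
    by (simp add: N_def indicator_def Int_def)
  have int_A: "integrable M (indicator (A i) :: 'a \<Rightarrow> real)" if "i < h" for i
    using A[OF that] by (simp add: emeasure_eq_measure)
  have int_N: "integrable M N"
    unfolding N_def using int_A by auto
  have "(\<integral>\<omega>. N \<omega> \<partial>M) = (\<Sum>i<h. prob (A i))"
    unfolding N_def using int_A A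
    by (subst Bochner_Integration.integral_sum) (auto intro!: sum.cong simp: Int_absorb2 sets.sets_into_space)
  also have "\<dots> \<le> h * p"
    using sum_mono[of "{..<h}" "\<lambda>i. prob (A i)" "\<lambda>_. p"] p by simp
  finally have E_N: "(\<integral>\<omega>. N \<omega> \<partial>M) \<le> h * p" .
  have "S \<subseteq> {\<omega>\<in>space M. h / 2 \<le> N \<omega>}"
    using S by (auto simp: N_eq)
  then have "prob S \<le> prob {\<omega>\<in>space M. h / 2 \<le> N \<omega>}"
    using int_N by (intro finite_measure_mono) auto
  also have "\<dots> \<le> (\<integral>\<omega>. N \<omega> \<partial>M) / (h / 2)"
    using \<open>h > 0\<close> by (intro integral_Markov_inequality_measure[where A = "space M"] int_N)
      (auto simp: N_def intro!: sum_nonneg)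
  also have "\<dots> \<le> 2 * p"
    using E_N \<open>h > 0\<close> by (simp add: field_simps)
  finally show ?thesis .
qed

lemma (in prob_space) prob_sum_squares_normal_small:
  fixes h :: nat
  assumes "h > 0" "\<sigma> > 0"
    and D: "\<And>i. i < h \<Longrightarrow> distributed M lborel (D i) (\<lambda>y. ennreal (normal_density 0 \<sigma> y))"
  shows "prob {\<omega>\<in>space M. (\<Sum>i<h. (D i \<omega>)\<^sup>2) \<le> \<sigma>\<^sup>2 * h / 1800} \<le> 1 / 15"
proof -
  define r where "r = \<sigma> / 30"
  have "r > 0"
    using \<open>\<sigma> > 0\<close> by (simp add: r_def)
  define A where "A i = {\<omega>\<in>space M. \<bar>D i \<omega>\<bar> \<le> r}" for i
  have D_meas: "D i \<in> borel_measurable M" if "i < h" for i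
    using distributed_measurable[OF D[OF that]] by simp
  have "{\<omega>\<in>space M. (\<Sum>i<h. (D i \<omega>)\<^sup>2) \<le> \<sigma>\<^sup>2 * h / 1800}
      \<subseteq> {\<omega>\<in>space M. h \<le> 2 * card {i\<in>{..<h}. \<omega> \<in> A i}}"
  proof safe
    fix \<omega> assume "\<omega> \<in> space M" "(\<Sum>i<h. (D i \<omega>)\<^sup>2) \<le> \<sigma>\<^sup>2 * h / 1800"
    then have "(\<Sum>i<h. (D i \<omega>)\<^sup>2) \<le> r\<^sup>2 * card {..<h} / 2"
      by (simp add: r_def power_divide)
    then have "card {..<h} \<le> 2 * card {i\<in>{..<h}. (D i \<omega>)\<^sup>2 \<le> r\<^sup>2}"
      using \<open>r > 0\<close> by (intro card_le_twice_card_below) auto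
    moreover have "(D i \<omega>)\<^sup>2 \<le> r\<^sup>2 \<longleftrightarrow> \<omega> \<in> A i" for i
      using abs_le_square_iff[of "D i \<omega>" r] \<open>\<omega> \<in> space M\<close> \<open>r > 0\<close> by (simp add: A_def)
    ultimately show "h \<le> 2 * card {i\<in>{..<h}. \<omega> \<in> A i}"
      by simp
  qed
  then have "prob {\<omega>\<in>space M. (\<Sum>i<h. (D i \<omega>)\<^sup>2) \<le> \<sigma>\<^sup>2 * h / 1800} \<le> 2 * (1 / 30)"
  proof (rule prob_half_of_events_le[OF \<open>h > 0\<close>, rotated 2])
    fix i assume "i < h"
    show "A i \<in> events"
      unfolding A_def using D_meas[OF \<open>i < h\<close>] by measurable
    show "prob (A i) \<le> 1 / 30"
      using prob_abs_le_normal[OF D[OF \<open>i < h\<close>] \<open>\<sigma> > 0\<close>, of r] \<open>\<sigma> > 0\<close> by (simp add: A_def r_def)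
  qed
  then show ?thesis
    by simp
qed

lemma (in prob_space) expectation_pow_card_small_indep:
  fixes G :: "nat \<Rightarrow> 'a \<Rightarrow> real"
  assumes ind: "indep_vars (\<lambda>_. borel) G {..<n}"
    and p: "\<And>j. j < n \<Longrightarrow> prob {\<omega>\<in>space M. G j \<omega> \<le> c} \<le> 1 / 15"
  shows "integrable M (\<lambda>\<omega>. (16::real) ^ card {j\<in>{..<n}. G j \<omega> \<le> c})"
    and "(\<integral>\<omega>. (16::real) ^ card {j\<in>{..<n}. G j \<omega> \<le> c} \<partial>M) \<le> 2 ^ n"
proof -
  define f where "f t = (if t \<le> c then 16 else 1 :: real)" for t
  define Y where "Y j \<omega> = f (G j \<omega>)" for j \<omega>
  have ind_Y: "indep_vars (\<lambda>_. borel) Y {..<n}"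
    unfolding Y_def by (rule indep_vars_compose2[OF ind]) (unfold f_def, measurable)
  have int_Y: "integrable M (Y j)" if "j < n" for j
  proof (rule integrable_const_bound[where B = 16])
    show "Y j \<in> borel_measurable M"
      using ind_Y that by (auto simp: indep_vars_def)
  qed (simp add: Y_def f_def)
  have E_Y: "0 \<le> (\<integral>\<omega>. Y j \<omega> \<partial>M) \<and> (\<integral>\<omega>. Y j \<omega> \<partial>M) \<le> 2" if "j < n" for j
  proof -
    define A where "A = {\<omega>\<in>space M. G j \<omega> \<le> c}"
    have "G j \<in> borel_measurable M"
      using ind that by (auto simp: indep_vars_def)
    then have A: "A \<in> events"
      unfolding A_def by measurable
    have "(\<integral>\<omega>. Y j \<omega> \<partial>M) = (\<integral>\<omega>. 1 + 15 * indicator A \<omega> \<partial>M)"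
      by (intro Bochner_Integration.integral_cong) (auto simp: Y_def f_def A_def indicator_def)
    also have "\<dots> = 1 + 15 * prob A"
      using A by (simp add: emeasure_eq_measure prob_space)
    finally show ?thesis
      using p[OF that] by (simp add: A_def)
  qed
  have prod_Y: "(\<Prod>j<n. Y j \<omega>) = 16 ^ card {j\<in>{..<n}. G j \<omega> \<le> c}" for \<omega>
  proof -
    have "(\<Prod>j<n. Y j \<omega>) = (\<Prod>j\<in>{..<n} \<inter> {j. G j \<omega> \<le> c}. 16) * (\<Prod>j\<in>{..<n} \<inter> - {j. G j \<omega> \<le> c}. 1)"
      unfolding Y_def f_def by (rule prod.If_cases) simp
    then show ?thesis
      by (simp add: Int_def conj_commute)
  qed
  show "integrable M (\<lambda>\<omega>. (16::real) ^ card {j\<in>{..<n}. G j \<omega> \<le> c})"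
    unfolding prod_Y[symmetric] using ind_Y int_Y by (intro indep_vars_integrable) auto
  have "(\<integral>\<omega>. (\<Prod>j<n. Y j \<omega>) \<partial>M) = (\<Prod>j<n. \<integral>\<omega>. Y j \<omega> \<partial>M)"
    using ind_Y int_Y by (intro indep_vars_lebesgue_integral) auto
  also have "\<dots> \<le> 2 ^ n"
    using prod_mono[of "{..<n}" "\<lambda>j. \<integral>\<omega>. Y j \<omega> \<partial>M" "\<lambda>_. 2"] E_Y by simp
  finally show "(\<integral>\<omega>. (16::real) ^ card {j\<in>{..<n}. G j \<omega> \<le> c} \<partial>M) \<le> 2 ^ n"
    by (simp only: prod_Y)
qed

lemma (in prob_space) prob_half_of_indep_le:
  fixes G :: "nat \<Rightarrow> 'a \<Rightarrow> real"
  assumes ind: "indep_vars (\<lambda>_. borel) G {..<n}"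
    and p: "\<And>j. j < n \<Longrightarrow> prob {\<omega>\<in>space M. G j \<omega> \<le> c} \<le> 1 / 15"
    and S: "S \<subseteq> {\<omega>\<in>space M. n \<le> 2 * card {j\<in>{..<n}. G j \<omega> \<le> c}}"
  shows "prob S \<le> (1 / 2) ^ n"
proof -
  define P where "P \<omega> = (16::real) ^ card {j\<in>{..<n}. G j \<omega> \<le> c}" for \<omega>
  note int_P = expectation_pow_card_small_indep(1)[OF ind p, folded P_def]
  have "S \<subseteq> {\<omega>\<in>space M. 4 ^ n \<le> P \<omega>}"
  proof
    fix \<omega> assume "\<omega> \<in> S"
    then have "n \<le> 2 * card {j\<in>{..<n}. G j \<omega> \<le> c}" and "\<omega> \<in> space M"
      using S by auto
    then have "(4::real) ^ n \<le> 4 ^ (2 * card {j\<in>{..<n}. G j \<omega> \<le> c})"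
      by (intro power_increasing) auto
    then show "\<omega> \<in> {\<omega>\<in>space M. 4 ^ n \<le> P \<omega>}"
      using \<open>\<omega> \<in> space M\<close> by (simp add: P_def power_mult)
  qed
  then have "prob S \<le> prob {\<omega>\<in>space M. 4 ^ n \<le> P \<omega>}"
    using int_P by (intro finite_measure_mono) auto
  also have "\<dots> \<le> (\<integral>\<omega>. P \<omega> \<partial>M) / 4 ^ n"
    by (intro integral_Markov_inequality_measure[where A = "space M"] int_P) (auto simp: P_def)
  also have "\<dots> \<le> 2 ^ n / 4 ^ n"
    using expectation_pow_card_small_indep(2)[OF ind p, folded P_def] by (intro divide_right_mono) auto
  also have "\<dots> = (1 / 2) ^ n"
    by (simp add: power_divide[symmetric])
  finally show ?thesis .
qed

lemma square_diff_le:
  fixes a b :: real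
  shows "(a - b)\<^sup>2 \<le> 2 * (a\<^sup>2 + b\<^sup>2)"
proof -
  have "(a - b)\<^sup>2 + (a + b)\<^sup>2 = 2 * (a\<^sup>2 + b\<^sup>2)"
    by (simp add: power2_eq_square algebra_simps)
  then show ?thesis
    using zero_le_power2[of "a + b"] by linarith
qed

lemma sum_block_increments_sq_le:
  fixes w :: "nat \<Rightarrow> real"
  shows "(\<Sum>j<n. \<Sum>i<h. (w (2*h*j + i + h) - w (2*h*j + i))\<^sup>2) \<le> 2 * (\<Sum>q<n*(2*h). (w q)\<^sup>2)"
proof -
  have halves: "(\<Sum>r<2*h. g r) = (\<Sum>i<h. g i + g (i + h))" for g :: "nat \<Rightarrow> real"
    using sum_mult_product[of g 2 h] by (simp add: numeral_2_eq_2 sum.distrib)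
  have "(\<Sum>j<n. \<Sum>i<h. (w (2*h*j + i + h) - w (2*h*j + i))\<^sup>2)
      \<le> (\<Sum>j<n. \<Sum>i<h. 2 * ((w (2*h*j + i + h))\<^sup>2 + (w (2*h*j + i))\<^sup>2))"
    by (intro sum_mono square_diff_le)
  also have "\<dots> = 2 * (\<Sum>j<n. \<Sum>r<2*h. (w (r + j*(2*h)))\<^sup>2)"
    unfolding halves by (simp add: sum_distrib_left algebra_simps)
  also have "\<dots> = 2 * (\<Sum>q<n*(2*h). (w q)\<^sup>2)"
    by (simp add: sum_mult_product)
  finally show ?thesis .
qed

lemma disjoint_family_on_blocks:
  "disjoint_family_on (\<lambda>j::nat. {L*j..<L*j+L}) A"
proof -
  have "{L*i..<L*i+L} \<inter> {L*j..<L*j+L} = {}" if "i < j" for i j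
  proof -
    have "L * Suc i \<le> L * j"
      using that by (intro mult_le_mono2) simp
    then show ?thesis
      by auto
  qed
  then show ?thesis
    unfolding disjoint_family_on_def by (metis Int_commute linorder_neqE_nat)
qed

lemma (in prob_space) indep_vars_blocks:
  fixes n L :: nat
  assumes ind: "indep_vars (\<lambda>_. N) X {..<n*L}"
    and \<phi>: "\<And>j. \<phi> j \<in> borel_measurable (PiM {L*j..<L*j+L} (\<lambda>_. N))"
  shows "indep_vars (\<lambda>_. borel) (\<lambda>j \<omega>. \<phi> j (restrict (\<lambda>k. X k \<omega>) {L*j..<L*j+L})) {..<n}"
proof -
  have "{L*j..<L*j+L} \<subseteq> {..<n*L}" if "j < n" for j
  proof -
    have "L * Suc j \<le> L * n"
      using that by (intro mult_le_mono2) simp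
    then show ?thesis
      by (auto simp: mult.commute)
  qed
  then have "indep_vars (\<lambda>j. PiM {L*j..<L*j+L} (\<lambda>_. N)) (\<lambda>j \<omega>. restrict (\<lambda>k. X k \<omega>) {L*j..<L*j+L}) {..<n}"
    by (intro indep_vars_restrict[OF ind] disjoint_family_on_blocks) auto
  then show ?thesis
    by (rule indep_vars_compose2) (rule \<phi>)
qed

lemma (in prob_space) indep_vars_wiener_block_sums:
  assumes "wiener_process M Su W"
  shows "indep_vars (\<lambda>_. borel)
    (\<lambda>j \<omega>. \<Sum>i<h. (W (real (Suc (2*h*j + i + h))) \<omega> - W (real (Suc (2*h*j + i))) \<omega>)\<^sup>2) {..<n}"
proof -
  define X where "X k \<omega> = W (real (Suc (Suc k))) \<omega> - W (real (Suc k)) \<omega>" for k \<omega>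
  define \<phi> where "\<phi> j y = (\<Sum>i<h. (\<Sum>k\<in>{2*h*j + i..<2*h*j + i + h}. y k)\<^sup>2)"
    for j and y :: "nat \<Rightarrow> real"
  have "\<forall>(m::nat) tt. 0 \<le> tt 0 \<and> (\<forall>k<m. tt k < tt (Suc k)) \<longrightarrow>
      indep_vars (\<lambda>_. borel) (\<lambda>k \<omega>. W (tt (Suc k)) \<omega> - W (tt k) \<omega>) {..<m}"
    using assms unfolding wiener_process_def by blast
  from this[rule_format, of "\<lambda>k. real (Suc k)" "n*(2*h)"]
  have "indep_vars (\<lambda>_. borel) X {..<n*(2*h)}"
    unfolding X_def by simp
  moreover have "\<phi> j \<in> borel_measurable (PiM {2*h*j..<2*h*j + 2*h} (\<lambda>_. borel))" for j
    unfolding \<phi>_def by (intro borel_measurable_sum borel_measurable_power) auto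
  ultimately have "indep_vars (\<lambda>_. borel)
      (\<lambda>j \<omega>. \<phi> j (restrict (\<lambda>k. X k \<omega>) {2*h*j..<2*h*j + 2*h})) {..<n}"
    by (rule indep_vars_blocks)
  moreover have "\<phi> j (restrict (\<lambda>k. X k \<omega>) {2*h*j..<2*h*j + 2*h})
      = (\<Sum>i<h. (W (real (Suc (2*h*j + i + h))) \<omega> - W (real (Suc (2*h*j + i))) \<omega>)\<^sup>2)" for j \<omega>
    unfolding \<phi>_def
  proof (intro sum.cong refl arg_cong[where f = "\<lambda>t. t\<^sup>2"])
    fix i assume "i \<in> {..<h}"
    then have "(\<Sum>k\<in>{2*h*j + i..<2*h*j + i + h}. restrict (\<lambda>k. X k \<omega>) {2*h*j..<2*h*j + 2*h} k)
        = (\<Sum>k\<in>{2*h*j + i..<2*h*j + i + h}. X k \<omega>)"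
      by (intro sum.cong) auto
    also have "\<dots> = W (real (Suc (2*h*j + i + h))) \<omega> - W (real (Suc (2*h*j + i))) \<omega>"
      unfolding X_def using sum_Suc_diff'[of "2*h*j + i" "2*h*j + i + h" "\<lambda>k. W (real (Suc k)) \<omega>"]
      by simp
    finally show "(\<Sum>k\<in>{2*h*j + i..<2*h*j + i + h}. restrict (\<lambda>k. X k \<omega>) {2*h*j..<2*h*j + 2*h} k)
        = W (real (Suc (2*h*j + i + h))) \<omega> - W (real (Suc (2*h*j + i))) \<omega>" .
  qed
  ultimately show ?thesis
    by simp
qed

lemma (in prob_space) wiener_prob_sum_sq_small:
  fixes h :: nat
  assumes wp: "wiener_process M Su W" and "Su > 0" "h > 0"
  shows "prob {\<omega>\<in>space M. (\<Sum>q<n*(2*h). (W (real (Suc q)) \<omega>)\<^sup>2) \<le> Su * n * (real h)\<^sup>2 / 7200} \<le> (1 / 2) ^ n"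
proof -
  have W_distr: "\<And>s t. 0 \<le> s \<Longrightarrow> s < t \<Longrightarrow> distributed M lborel (\<lambda>\<omega>. W t \<omega> - W s \<omega>)
        (\<lambda>y. ennreal (normal_density 0 (sqrt (Su * (t - s))) y))"
    using wp unfolding wiener_process_def by auto
  define G where
    "G j \<omega> = (\<Sum>i<h. (W (real (Suc (2*h*j + i + h))) \<omega> - W (real (Suc (2*h*j + i))) \<omega>)\<^sup>2)" for j \<omega>
  have increment_distr: "distributed M lborel (\<lambda>\<omega>. W (real (Suc (a + h))) \<omega> - W (real (Suc a)) \<omega>)
      (\<lambda>y. ennreal (normal_density 0 (sqrt (Su * h)) y))" for a
    using W_distr[of "real (Suc a)" "real (Suc (a + h))"] \<open>h > 0\<close> by simp
  have G_small: "prob {\<omega>\<in>space M. G j \<omega> \<le> Su * (real h)\<^sup>2 / 1800} \<le> 1 / 15" for j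
  proof -
    have "prob {\<omega>\<in>space M. G j \<omega> \<le> (sqrt (Su * h))\<^sup>2 * h / 1800} \<le> 1 / 15"
      unfolding G_def using \<open>Su > 0\<close> \<open>h > 0\<close>
      by (intro prob_sum_squares_normal_small increment_distr) auto
    then show ?thesis
      using \<open>Su > 0\<close> by (simp add: power2_eq_square mult.assoc)
  qed
  have G_indep: "indep_vars (\<lambda>_. borel) G {..<n}"
    unfolding G_def by (rule indep_vars_wiener_block_sums[OF wp])
  have "{\<omega>\<in>space M. (\<Sum>q<n*(2*h). (W (real (Suc q)) \<omega>)\<^sup>2) \<le> Su * n * (real h)\<^sup>2 / 7200}
      \<subseteq> {\<omega>\<in>space M. n \<le> 2 * card {j\<in>{..<n}. G j \<omega> \<le> Su * (real h)\<^sup>2 / 1800}}"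
  proof safe
    fix \<omega> assume "(\<Sum>q<n*(2*h). (W (real (Suc q)) \<omega>)\<^sup>2) \<le> Su * n * (real h)\<^sup>2 / 7200"
    then have "(\<Sum>j<n. G j \<omega>) \<le> Su * n * (real h)\<^sup>2 / 3600"
      using sum_block_increments_sq_le[where w = "\<lambda>q. W (real (Suc q)) \<omega>" and n = n and h = h]
      unfolding G_def by linarith
    then have "(\<Sum>j<n. G j \<omega>) \<le> Su * (real h)\<^sup>2 / 1800 * card {..<n} / 2"
      by (simp add: ac_simps)
    then have "card {..<n} \<le> 2 * card {j\<in>{..<n}. G j \<omega> \<le> Su * (real h)\<^sup>2 / 1800}"
      using \<open>Su > 0\<close> \<open>h > 0\<close> by (intro card_le_twice_card_below) (auto simp: G_def intro!: sum_nonneg)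
    then show "n \<le> 2 * card {j\<in>{..<n}. G j \<omega> \<le> Su * (real h)\<^sup>2 / 1800}"
      by simp
  qed
  then show ?thesis
    by (rule prob_half_of_indep_le[OF G_indep G_small])
qed

(* With about 3 ln k blocks the failure probability 2^-(3 ln k) <= 1/k^2
   is summable, at the price of only a factor ln ln 2^k in the lower bound. *)
definition block_count :: "nat \<Rightarrow> nat" where
  "block_count k = nat \<lceil>3 * ln (real k)\<rceil>"

definition half_block_length :: "nat \<Rightarrow> nat" where
  "half_block_length k = 2 ^ k div (2 * block_count k)"

lemma block_count_ge: "3 * ln (real k) \<le> real (block_count k)"
  unfolding block_count_def by linarith

lemma half_power_block_count_le:
  assumes "k \<ge> 1"
  shows "(1 / 2) ^ block_count k \<le> inverse (real k ^ 2)"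
proof -
  have "2 * ln (real k) = (3 * ln (real k)) * (2 / 3)"
    by simp
  also have "\<dots> \<le> real (block_count k) * ln 2"
    using assms block_count_ge ln2_ge_two_thirds by (intro mult_mono) auto
  finally have "exp (2 * ln (real k)) \<le> exp (real (block_count k) * ln 2)"
    by simp
  moreover have "real k ^ 2 = exp (2 * ln (real k))"
    using assms by (simp add: powr_def flip: powr_numeral)
  ultimately have "real k ^ 2 \<le> 2 ^ block_count k"
    by (simp add: exp_of_nat_mult)
  then have "inverse ((2::real) ^ block_count k) \<le> inverse (real k ^ 2)"
    using assms by (intro le_imp_inverse_le) auto
  then show ?thesis
    by (simp add: power_one_over inverse_eq_divide)
qed

lemma blocks_le_power: "block_count k * (2 * half_block_length k) \<le> 2 ^ k"
  using times_div_less_eq_dividend[of "2 * block_count k" "2 ^ k"]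
  unfolding half_block_length_def by (simp add: ac_simps)

lemma eventually_block_params:
  "\<forall>\<^sub>F k in sequentially. 0 < block_count k \<and>
     real (block_count k) \<le> 4 * ln (ln (2 ^ k)) \<and>
     2 ^ k \<le> 4 * real (block_count k) * real (half_block_length k)"
proof -
  have "\<forall>\<^sub>F k in sequentially. 0 < ln (real k)"
    and "\<forall>\<^sub>F k in sequentially. 4 * (3 * ln (real k) + 1) \<le> 2 ^ k"
    and "\<forall>\<^sub>F k in sequentially. 3 * ln (real k) + 1 \<le> 4 * ln (real k * ln 2)"
    by real_asymp+
  then show ?thesis
  proof eventually_elim
    case (elim k)
    define n where "n = block_count k"
    define h where "h = half_block_length k"
    have "3 * ln (real k) \<le> n" and n_le: "real n \<le> 3 * ln (real k) + 1"
      unfolding n_def block_count_def using elim by linarith+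
    then have "0 < n"
      using elim by linarith
    have "2 ^ k = 2 * n * h + 2 ^ k mod (2 * n)"
      unfolding h_def n_def half_block_length_def by simp
    moreover have "2 ^ k mod (2 * n) < 2 * n"
      using \<open>0 < n\<close> by simp
    ultimately have "2 ^ k < 2 * n * h + 2 * n"
      by linarith
    then have "real (2 ^ k) < real (2 * n * h + 2 * n)"
      by (simp only: of_nat_less_iff)
    then have "(2::real) ^ k < 2 * (real n * real h) + 2 * real n"
      by (simp add: algebra_simps)
    moreover have "4 * real n \<le> 2 ^ k"
      using elim n_le by (smt (verit))
    ultimately have "2 ^ k \<le> 4 * (real n * real h)"
      by (smt (verit))
    moreover have "ln (ln (2 ^ k :: real)) = ln (real k * ln 2)"
      by (simp add: ln_realpow)
    ultimately show ?case
      using \<open>0 < n\<close> n_le elim unfolding n_def h_def by (auto simp: mult.assoc)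
  qed
qed

lemma square_div_le_of_block_params:
  fixes P n h l :: real
  assumes "0 < n" "n \<le> 4 * l" "0 \<le> P" "P \<le> 4 * n * h"
  shows "P\<^sup>2 / (64 * l) \<le> n * h\<^sup>2"
proof -
  have "P\<^sup>2 / (64 * l) \<le> P\<^sup>2 / (16 * n)"
    using assms by (intro divide_left_mono) auto
  also have "\<dots> \<le> n * h\<^sup>2"
  proof -
    have "P\<^sup>2 \<le> (4 * n * h)\<^sup>2"
      using assms by (intro power_mono) auto
    then show ?thesis
      using assms by (simp add: field_simps power2_eq_square)
  qed
  finally show ?thesis .
qed

lemma (in prob_space) wiener_eventually_blocks_not_small:
  assumes wp: "wiener_process M Su W" and "Su > 0"
  shows "AE \<omega> in M. \<forall>\<^sub>F k in sequentially.
    Su * block_count k * (real (half_block_length k))\<^sup>2 / 7200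
      < (\<Sum>q<block_count k * (2 * half_block_length k). (W (real (Suc q)) \<omega>)\<^sup>2)"
proof -
  have W_meas: "\<And>t. t \<ge> 0 \<Longrightarrow> W t \<in> borel_measurable M"
    using wp unfolding wiener_process_def by auto
  define A where "A k = {\<omega>\<in>space M.
    (\<Sum>q<block_count k * (2 * half_block_length k). (W (real (Suc q)) \<omega>)\<^sup>2)
      \<le> Su * block_count k * (real (half_block_length k))\<^sup>2 / 7200}" for k
  have A_sets: "A k \<in> events" for k
    unfolding A_def using W_meas by measurable
  have "\<forall>\<^sub>F k in sequentially. norm (prob (A k)) \<le> inverse (real k ^ 2)"
    using eventually_block_params eventually_ge_at_top[of 1]
  proof eventually_elim
    case (elim k)
    then have "2 ^ k \<le> 4 * real (block_count k) * real (half_block_length k)"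
      by blast
    with zero_less_power[of "2::real" k, OF zero_less_numeral]
    have "0 < 4 * real (block_count k) * real (half_block_length k)"
      by (rule less_le_trans)
    then have "half_block_length k > 0"
      by (simp add: zero_less_mult_iff)
    then have "prob (A k) \<le> (1 / 2) ^ block_count k"
      unfolding A_def using wiener_prob_sum_sq_small[OF wp \<open>Su > 0\<close>] by blast
    also have "\<dots> \<le> inverse (real k ^ 2)"
      using elim by (intro half_power_block_count_le) auto
    finally show ?case
      by simp
  qed
  then have "summable (\<lambda>k. prob (A k))"
    by (rule summable_comparison_test_ev) (rule inverse_power_summable, simp)
  then have "AE \<omega> in M. \<forall>\<^sub>F k in sequentially. \<omega> \<in> space M - A k"
    using A_sets by (intro borel_cantelli_AE1) (auto simp: emeasure_eq_measure)
  then show ?thesis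
  proof eventually_elim
    case (elim \<omega>)
    then show ?case
      by eventually_elim (auto simp: A_def)
  qed
qed

lemma (in prob_space) wiener_sum_sq_dyadic_lower:
  assumes "wiener_process M Su W" "Su > 0"
  shows "AE \<omega> in M. \<forall>\<^sub>F k in sequentially.
    Su / 460800 * (2 ^ k)\<^sup>2 / ln (ln (2 ^ k)) \<le> (\<Sum>i=1..2^k. (W (real i) \<omega>)\<^sup>2)"
  using wiener_eventually_blocks_not_small[OF assms]
proof eventually_elim
  case (elim \<omega>)
  with eventually_block_params show ?case
  proof eventually_elim
    case (elim k)
    define n where "n = real (block_count k)"
    define h where "h = real (half_block_length k)"
    have "Su / 460800 * (2 ^ k)\<^sup>2 / ln (ln (2 ^ k)) = Su / 7200 * ((2 ^ k)\<^sup>2 / (64 * ln (ln (2 ^ k))))"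
      by simp
    also have "\<dots> \<le> Su / 7200 * (n * h\<^sup>2)"
      using elim \<open>Su > 0\<close> unfolding n_def h_def
      by (intro mult_left_mono square_div_le_of_block_params) auto
    also have "\<dots> \<le> (\<Sum>q<block_count k * (2 * half_block_length k). (W (real (Suc q)) \<omega>)\<^sup>2)"
      using elim by (simp add: n_def h_def mult.assoc)
    also have "\<dots> \<le> (\<Sum>q<2^k. (W (real (Suc q)) \<omega>)\<^sup>2)"
      using blocks_le_power by (intro sum_mono2) auto
    also have "\<dots> = (\<Sum>i=1..2^k. (W (real i) \<omega>)\<^sup>2)"
      by (simp add: sum.atLeast1_atMost_eq)
    finally show ?case .
  qed
qed

lemma lower_bound_between_powers_of_two:
  fixes s :: "nat \<Rightarrow> real"
  assumes "mono s" "c \<ge> 0" "1 \<le> k" "2 ^ k \<le> m" "m < 2 ^ (k + 1)"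
    and lnln_pos: "0 < ln (ln (2 ^ k :: real))"
    and s_k: "c * (2 ^ k)\<^sup>2 / ln (ln (2 ^ k)) \<le> s (2 ^ k)"
  shows "c / 4 * (real m)\<^sup>2 / ln (ln (real m)) \<le> s m"
proof -
  have "(2::real) ^ k \<le> real m"
    using \<open>2 ^ k \<le> m\<close> by (metis of_nat_le_iff of_nat_numeral of_nat_power)
  then have "ln (2 ^ k :: real) \<le> ln (real m)"
    by (rule ln_mono) simp
  moreover have "0 < ln (2 ^ k :: real)"
    using \<open>1 \<le> k\<close> by (simp add: one_less_power)
  ultimately have lnln_le: "ln (ln (2 ^ k :: real)) \<le> ln (ln (real m))"
    by (rule ln_mono)
  have "real m < 2 * 2 ^ k"
    using \<open>m < 2 ^ (k + 1)\<close> by (metis of_nat_less_iff of_nat_mult of_nat_numeral of_nat_power power_Suc Suc_eq_plus1)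
  then have "(real m)\<^sup>2 \<le> 4 * (2 ^ k)\<^sup>2"
    using power_mono[of "real m" "2 * 2 ^ k" 2] by (simp add: power_mult_distrib)
  then have "c / 4 * (real m)\<^sup>2 \<le> c * (2 ^ k)\<^sup>2"
    using mult_left_mono[of "(real m)\<^sup>2" "4 * (2 ^ k)\<^sup>2" "c / 4"] \<open>c \<ge> 0\<close> by simp
  then have "c / 4 * (real m)\<^sup>2 / ln (ln (real m)) \<le> c * (2 ^ k)\<^sup>2 / ln (ln (real m))"
    using lnln_pos lnln_le by (intro divide_right_mono) auto
  also have "\<dots> \<le> c * (2 ^ k)\<^sup>2 / ln (ln (2 ^ k))"
    using lnln_pos lnln_le \<open>c \<ge> 0\<close> by (intro divide_left_mono) auto
  also have "\<dots> \<le> s m"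
    using s_k \<open>mono s\<close> \<open>2 ^ k \<le> m\<close> by (meson monoD order.trans)
  finally show ?thesis .
qed

lemma eventually_lower_bound_from_dyadic:
  fixes s :: "nat \<Rightarrow> real" and c :: real
  assumes "mono s" "c \<ge> 0"
    and dyadic: "\<forall>\<^sub>F k in sequentially. c * (2 ^ k)\<^sup>2 / ln (ln (2 ^ k)) \<le> s (2 ^ k)"
  shows "\<forall>\<^sub>F m in sequentially. c / 4 * (real m)\<^sup>2 / ln (ln (real m)) \<le> s m"
proof -
  have "\<forall>\<^sub>F k in sequentially. 1 \<le> k"
    and "\<forall>\<^sub>F k in sequentially. 0 < ln (ln (2 ^ k :: real))"
    by (rule eventually_ge_at_top) real_asymp
  with dyadic have "\<forall>\<^sub>F k in sequentially. 1 \<le> k \<and>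
      0 < ln (ln (2 ^ k :: real)) \<and> c * (2 ^ k)\<^sup>2 / ln (ln (2 ^ k)) \<le> s (2 ^ k)"
    by eventually_elim blast
  then obtain K where K: "\<And>k. k \<ge> K \<Longrightarrow> 1 \<le> k \<and>
      0 < ln (ln (2 ^ k :: real)) \<and> c * (2 ^ k)\<^sup>2 / ln (ln (2 ^ k)) \<le> s (2 ^ k)"
    unfolding eventually_sequentially by blast
  have "c / 4 * (real m)\<^sup>2 / ln (ln (real m)) \<le> s m" if "2 ^ K \<le> m" for m
  proof -
    have "1 \<le> m"
      using that one_le_power[of "2::nat" K] by linarith
    then obtain k where k: "2 ^ k \<le> m" "m < 2 ^ (k + 1)"
      using ex_power_ivl1[of 2 m] by auto
    have "(2::nat) ^ K < 2 ^ (k + 1)"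
      using that k(2) by linarith
    then have "K < k + 1"
      by (rule power_less_imp_less_exp[rotated]) simp
    with K[of k] show ?thesis
      by (intro lower_bound_between_powers_of_two[OF assms(1,2) _ k]) auto
  qed
  then show ?thesis
    unfolding eventually_sequentially by blast
qed

lemma (in prob_space) wiener_sum_sq_lower:
  assumes "wiener_process M Su W" "Su > 0"
  shows "AE \<omega> in M. \<forall>\<^sub>F m in sequentially.
    Su / 1843200 * (real m)\<^sup>2 / ln (ln (real m)) \<le> (\<Sum>i=1..m. (W (real i) \<omega>)\<^sup>2)"
  using wiener_sum_sq_dyadic_lower[OF assms]
proof eventually_elim
  case (elim \<omega>)
  have "mono (\<lambda>m. \<Sum>i=1..m. (W (real i) \<omega>)\<^sup>2)"
    by (intro monoI sum_mono2) auto
  then show ?case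
    using eventually_lower_bound_from_dyadic[of _ "Su / 460800"] elim \<open>Su > 0\<close> by simp
qed

lemma sum_squares_le_perturbed:
  fixes x w :: "'i \<Rightarrow> real"
  shows "(\<Sum>i\<in>A. (w i)\<^sup>2) \<le> 2 * (\<Sum>i\<in>A. (x i)\<^sup>2) + 2 * (\<Sum>i\<in>A. (x i - w i)\<^sup>2)"
proof -
  have "(\<Sum>i\<in>A. (w i)\<^sup>2) \<le> (\<Sum>i\<in>A. 2 * ((x i)\<^sup>2 + (x i - w i)\<^sup>2))"
    using square_diff_le[of "x i" "x i - w i" for i] by (intro sum_mono) simp
  also have "\<dots> = 2 * (\<Sum>i\<in>A. (x i)\<^sup>2) + 2 * (\<Sum>i\<in>A. (x i - w i)\<^sup>2)"
    by (simp add: sum.distrib sum_distrib_left)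
  finally show ?thesis .
qed

lemma sum_squares_diff_le_powr:
  fixes x w :: "nat \<Rightarrow> real"
  assumes "1 \<le> m" "(MAX i\<in>{1..m}. \<bar>x i - w i\<bar>) \<le> C * real m powr (1/2 - \<delta>)"
  shows "(\<Sum>i=1..m. (x i - w i)\<^sup>2) \<le> C\<^sup>2 * real m powr (2 - 2 * \<delta>)"
proof -
  define a where "a = C * real m powr (1/2 - \<delta>)"
  have "(x i - w i)\<^sup>2 \<le> a\<^sup>2" if "i \<in> {1..m}" for i
  proof -
    have "\<bar>x i - w i\<bar> \<le> a"
      using assms that by (simp add: a_def)
    then show ?thesis
      using abs_le_square_iff[of "x i - w i" a] by simp
  qed
  then have "(\<Sum>i=1..m. (x i - w i)\<^sup>2) \<le> real m * a\<^sup>2"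
    using sum_mono[of "{1..m}" "\<lambda>i. (x i - w i)\<^sup>2" "\<lambda>_. a\<^sup>2"] by simp
  also have "\<dots> = C\<^sup>2 * real m powr (2 - 2 * \<delta>)"
  proof -
    have "2 - 2 * \<delta> = 1 + (1/2 - \<delta>) + (1/2 - \<delta>)"
      by simp
    then have "real m powr (2 - 2 * \<delta>) = real m powr 1 * real m powr (1/2 - \<delta>) * real m powr (1/2 - \<delta>)"
      by (simp only: powr_add)
    then show ?thesis
      by (simp add: a_def power2_eq_square)
  qed
  finally show ?thesis .
qed

lemma eventually_sum_squares_lower_transfer:
  fixes x w :: "nat \<Rightarrow> real"
  assumes "0 < \<delta>" "0 < c"
    and approx: "\<forall>\<^sub>F m in sequentially. (MAX i\<in>{1..m}. \<bar>x i - w i\<bar>) \<le> C * real m powr (1/2 - \<delta>)"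
    and lower: "\<forall>\<^sub>F m in sequentially. c * (real m)\<^sup>2 / ln (ln (real m)) \<le> (\<Sum>i=1..m. (w i)\<^sup>2)"
  shows "\<forall>\<^sub>F m in sequentially. c / 4 * (real m)\<^sup>2 / ln (ln (real m)) \<le> (\<Sum>i=1..m. (x i)\<^sup>2)"
proof -
  define B where "B = C\<^sup>2 + 1"
  have "B > 0"
    by (simp add: B_def add_nonneg_pos)
  then have "\<forall>\<^sub>F m in sequentially. B * real m powr (2 - 2 * \<delta>) \<le> c / 4 * (real m)\<^sup>2 / ln (ln (real m))"
    using assms(1,2) by real_asymp
  with approx lower eventually_ge_at_top[of 1] show ?thesis
  proof eventually_elim
    case (elim m)
    have "(\<Sum>i=1..m. (x i - w i)\<^sup>2) \<le> C\<^sup>2 * real m powr (2 - 2 * \<delta>)"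
      using elim by (intro sum_squares_diff_le_powr) auto
    also have "\<dots> \<le> B * real m powr (2 - 2 * \<delta>)"
      by (intro mult_right_mono) (auto simp: B_def)
    finally have "(\<Sum>i=1..m. (x i - w i)\<^sup>2) \<le> c / 4 * (real m)\<^sup>2 / ln (ln (real m))"
      using elim by linarith
    moreover have "c / 4 * (real m)\<^sup>2 / ln (ln (real m)) = c * (real m)\<^sup>2 / ln (ln (real m)) / 4"
      by simp
    ultimately show ?case
      using elim(2) sum_squares_le_perturbed[of w "{1..m}" x] by argo
  qed
qed

lemma AE_eventually_measurable_threshold:
  fixes P :: "nat \<Rightarrow> 'a \<Rightarrow> bool"
  assumes [measurable]: "\<And>m. Measurable.pred M (P m)"
    and "AE \<omega> in M. \<forall>\<^sub>F m in sequentially. P m \<omega>"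
  shows "\<exists>m0 \<in> measurable M (count_space UNIV). AE \<omega> in M. \<forall>m\<ge>m0 \<omega>. P m \<omega>"
proof
  show "(\<lambda>\<omega>. LEAST N. \<forall>m\<ge>N. P m \<omega>) \<in> measurable M (count_space UNIV)"
    by measurable
  show "AE \<omega> in M. \<forall>m\<ge>(LEAST N. \<forall>m\<ge>N. P m \<omega>). P m \<omega>"
    using assms(2)
  proof eventually_elim
    case (elim \<omega>)
    then show ?case
      unfolding eventually_sequentially by (rule LeastI_ex)
  qed
qed

lemma borel_measurable_random_walk:
  fixes x u :: "nat \<Rightarrow> 'a \<Rightarrow> real"
  assumes "x 0 \<in> borel_measurable M" "\<And>i. u i \<in> borel_measurable M"
    and "\<And>i \<omega>. i \<ge> 1 \<Longrightarrow> x i \<omega> = x (i - 1) \<omega> + u i \<omega>"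
  shows "x i \<in> borel_measurable M"
proof (induction i)
  case (Suc i)
  then show ?case
    using assms(2,3)[of "Suc i"] by simp
qed (rule assms(1))

theorem lemmaA2:
  fixes M :: "'a measure"
    and x u :: "nat \<Rightarrow> 'a \<Rightarrow> real"
    and Su \<delta>' :: real
  assumes "prob_space M"
    and rv_u: "\<And>i. u i \<in> borel_measurable M"
    and rv_x0: "x 0 \<in> borel_measurable M"
    and rec: "\<And>i \<omega>. i \<ge> 1 \<Longrightarrow> x i \<omega> = x (i - 1) \<omega> + u i \<omega>"
    and int_u: "\<And>i. i \<ge> 1 \<Longrightarrow> integrable M (u i)"
    and mean0: "\<And>i. i \<ge> 1 \<Longrightarrow> (\<integral>\<omega>. u i \<omega> \<partial>M) = 0"
    and sq_int_u: "\<And>i. i \<ge> 1 \<Longrightarrow> integrable M (\<lambda>\<omega>. (u i \<omega>)\<^sup>2)"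
    and lrv: "has_long_run_variance M u Su" and Su_pos: "Su > 0"
    and x0_sq: "integrable M (\<lambda>\<omega>. (x 0 \<omega>)\<^sup>2)"
    and delta: "0 < \<delta>'" "\<delta>' < 1/2"
    and strong_approx: "\<exists>W. wiener_process M Su W \<and>
       (AE \<omega> in M. \<exists>C. \<forall>\<^sub>F t in sequentially.
          (MAX i\<in>{1..t}. \<bar>x i \<omega> - W (real i) \<omega>\<bar>) \<le> C * real t powr (1/2 - \<delta>'))"
  shows "\<exists>c0 m0. 0 < c0 \<and> m0 \<in> measurable M (count_space UNIV) \<and>
           (AE \<omega> in M. \<forall>m\<ge>m0 \<omega>.
              (\<Sum>i=1..m. (x i \<omega>)\<^sup>2) \<ge> c0 * (real m)\<^sup>2 / ln (ln (real m)))"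
proof -
  interpret prob_space M by fact
  obtain W where wp: "wiener_process M Su W"
    and approx: "AE \<omega> in M. \<exists>C. \<forall>\<^sub>F t in sequentially.
          (MAX i\<in>{1..t}. \<bar>x i \<omega> - W (real i) \<omega>\<bar>) \<le> C * real t powr (1/2 - \<delta>')"
    using strong_approx by blast
  define c0 where "c0 = Su / 7372800"
  have lower: "AE \<omega> in M. \<forall>\<^sub>F m in sequentially. c0 * (real m)\<^sup>2 / ln (ln (real m)) \<le> (\<Sum>i=1..m. (x i \<omega>)\<^sup>2)"
    using approx wiener_sum_sq_lower[OF wp Su_pos]
  proof eventually_elim
    case (elim \<omega>)
    then obtain C where "\<forall>\<^sub>F m in sequentially.
        (MAX i\<in>{1..m}. \<bar>x i \<omega> - W (real i) \<omega>\<bar>) \<le> C * real m powr (1/2 - \<delta>')"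
      by blast
    from eventually_sum_squares_lower_transfer[OF delta(1) _ this elim(2)] show ?case
      using Su_pos by (simp add: c0_def)
  qed
  note borel_measurable_random_walk[OF rv_x0 rv_u rec, measurable]
  have "\<exists>m0 \<in> measurable M (count_space UNIV).
      AE \<omega> in M. \<forall>m\<ge>m0 \<omega>. c0 * (real m)\<^sup>2 / ln (ln (real m)) \<le> (\<Sum>i=1..m. (x i \<omega>)\<^sup>2)"
    using lower by (intro AE_eventually_measurable_threshold) measurable
  moreover have "0 < c0"
    using Su_pos by (simp add: c0_def)
  ultimately show ?thesis
    by blast
qed

end
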